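(* Let $(E,P,\vartheta)$ be a complete bipolar metric space and let $F\colon E\cup P\to E\cup P$ be a covariant mapping which is a polynomial contraction, i.e. there exist $\pi\in(0,1)$, an integer $\sigma\geq 1$ and functions $q_\upsilon\colon E\times P\to[0,\infty)$, $\upsilon=0,\dots,\sigma$, such that $$\sum_{\upsilon=0}^{\sigma} q_\upsilon(Fe,Ff)\,\vartheta^\upsilon(Fe,Ff)\leq \pi\sum_{\upsilon=0}^{\sigma} q_\upsilon(e,f)\,\vartheta^\upsilon(e,f)\quad\text{for all } e\in E,\ f\in P.$$ Assume moreover that (i) $F$ is continuous, and (ii) there exist $\varrho\in\{1,\dots,\sigma\}$ and $Q_\varrho>0$ such that $q_\varrho(e,f)\geq Q_\varrho$ for all $e\in E$, $f\in P$. Then $F$ has a unique fixed point.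
   Context: A bipolar metric space is a triple $(E,P,\vartheta)$ where $E,P$ are nonempty sets and $\vartheta\colon E\times P\to[0,\infty)$ satisfies: (1) for $e\in E$, $f\in P$, $\vartheta(e,f)=0$ iff $e=f$; (2) $\vartheta(e,f)=\vartheta(f,e)$ whenever $e,f\in E\cap P$; (3) $\vartheta(e,f)\leq\vartheta(e,z)+\vartheta(r,z)+\vartheta(r,f)$ for all $e,r\in E$, $z,f\in P$. A sequence $(x_n)$ in $E$ converges to $y\in P$ if $\vartheta(x_n,y)\to0$; a sequence $(y_n)$ in $P$ converges to $x\in E$ if $\vartheta(x,y_n)\to 0$. A bisequence $(x_n,y_n)$ with $x_n\in E$, $y_n\in P$ is convergent if both $(x_n)$ and $(y_n)$ converge, biconvergent if they converge to the same point, and Cauchy if for every $\varepsilon>0$ there is $N$ with $\vartheta(x_n,y_m)<\varepsilon$ for all $n,m\geq N$. The space is complete if every Cauchy bisequence is convergent. A map $F\colon E\cup P\to E\cup P$ is covariant if $F(E)\subseteq E$ and $F(P)\subseteq P$. $F$ is continuous if whenever a sequence $(u_n)$ (in $E$ or in $P$) converges to a point $v$, the sequence $(Fu_n)$ converges to $Fv$. $\vartheta^\upsilon$ denotes the $\upsilon$-th power of $\vartheta$, with $\vartheta^0\equiv 1$. A fixed point of $F$ is a point $g$ with $Fg=g$. *)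

theory Defs
  imports Complex_Main
begin

definition bipolar_metric_space :: "'a set \<Rightarrow> 'a set \<Rightarrow> ('a \<Rightarrow> 'a \<Rightarrow> real) \<Rightarrow> bool" where
  "bipolar_metric_space E P d \<longleftrightarrow>
     E \<noteq> {} \<and> P \<noteq> {} \<and>
     (\<forall>e\<in>E. \<forall>f\<in>P. d e f \<ge> 0) \<and>
     (\<forall>e\<in>E. \<forall>f\<in>P. d e f = 0 \<longleftrightarrow> e = f) \<and>
     (\<forall>e\<in>E \<inter> P. \<forall>f\<in>E \<inter> P. d e f = d f e) \<and>
     (\<forall>e\<in>E. \<forall>r\<in>E. \<forall>z\<in>P. \<forall>f\<in>P. d e f \<le> d e z + d r z + d r f)"

definition conv_left :: "'a set \<Rightarrow> 'a set \<Rightarrow> ('a \<Rightarrow> 'a \<Rightarrow> real) \<Rightarrow> (nat \<Rightarrow> 'a) \<Rightarrow> 'a \<Rightarrow> bool" where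
  "conv_left E P d x y \<longleftrightarrow> (\<forall>n. x n \<in> E) \<and> y \<in> P \<and> (\<lambda>n. d (x n) y) \<longlonglongrightarrow> 0"

definition conv_right :: "'a set \<Rightarrow> 'a set \<Rightarrow> ('a \<Rightarrow> 'a \<Rightarrow> real) \<Rightarrow> (nat \<Rightarrow> 'a) \<Rightarrow> 'a \<Rightarrow> bool" where
  "conv_right E P d y x \<longleftrightarrow> (\<forall>n. y n \<in> P) \<and> x \<in> E \<and> (\<lambda>n. d x (y n)) \<longlonglongrightarrow> 0"

definition cauchy_bisequence :: "'a set \<Rightarrow> 'a set \<Rightarrow> ('a \<Rightarrow> 'a \<Rightarrow> real) \<Rightarrow> (nat \<Rightarrow> 'a) \<Rightarrow> (nat \<Rightarrow> 'a) \<Rightarrow> bool" where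
  "cauchy_bisequence E P d x y \<longleftrightarrow> (\<forall>n. x n \<in> E) \<and> (\<forall>n. y n \<in> P) \<and>
     (\<forall>\<epsilon>>0. \<exists>N. \<forall>n\<ge>N. \<forall>m\<ge>N. d (x n) (y m) < \<epsilon>)"

definition convergent_bisequence :: "'a set \<Rightarrow> 'a set \<Rightarrow> ('a \<Rightarrow> 'a \<Rightarrow> real) \<Rightarrow> (nat \<Rightarrow> 'a) \<Rightarrow> (nat \<Rightarrow> 'a) \<Rightarrow> bool" where
  "convergent_bisequence E P d x y \<longleftrightarrow> (\<exists>v. conv_left E P d x v) \<and> (\<exists>u. conv_right E P d y u)"

definition complete_bipolar :: "'a set \<Rightarrow> 'a set \<Rightarrow> ('a \<Rightarrow> 'a \<Rightarrow> real) \<Rightarrow> bool" where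
  "complete_bipolar E P d \<longleftrightarrow>
     (\<forall>x y. cauchy_bisequence E P d x y \<longrightarrow> convergent_bisequence E P d x y)"

definition covariant :: "'a set \<Rightarrow> 'a set \<Rightarrow> ('a \<Rightarrow> 'a) \<Rightarrow> bool" where
  "covariant E P F \<longleftrightarrow> F ` E \<subseteq> E \<and> F ` P \<subseteq> P"

definition bipolar_continuous :: "'a set \<Rightarrow> 'a set \<Rightarrow> ('a \<Rightarrow> 'a \<Rightarrow> real) \<Rightarrow> ('a \<Rightarrow> 'a) \<Rightarrow> bool" where
  "bipolar_continuous E P d F \<longleftrightarrow>
     (\<forall>u v. conv_left E P d u v \<longrightarrow> conv_left E P d (\<lambda>n. F (u n)) (F v)) \<and>
     (\<forall>u v. conv_right E P d u v \<longrightarrow> conv_right E P d (\<lambda>n. F (u n)) (F v))"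

end

theory Submission
  imports Defs
begin

(* The polynomial S(e,f) = \<Sum>v\<le>\<sigma>. q v e f * d(e,f)^v dominates Q * d(e,f)^\<rho> and shrinks by the factor
   \<pi> under F, so d(F^n e, F^n f) \<le> C(e,f) * \<lambda>^n with \<lambda> = root \<rho> \<pi> < 1. As in Banach's theorem, the
   quadrilateral inequality and a geometric series make every orbit bisequence (F^n e, F^n f) Cauchy;
   by completeness it biconverges to some u \<in> E \<inter> P, which is fixed by continuity of F. Two fixed
   points e \<in> E and f \<in> P satisfy S(e,f) \<le> \<pi> * S(e,f), hence S(e,f) = 0 and e = f. *)

context
  fixes E P :: "'a set" and d :: "'a \<Rightarrow> 'a \<Rightarrow> real"
  assumes bipolar: "bipolar_metric_space E P d"
begin

lemma bipolar_dist_nonneg: "e \<in> E \<Longrightarrow> f \<in> P \<Longrightarrow> 0 \<le> d e f"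
  using bipolar unfolding bipolar_metric_space_def by blast

lemma bipolar_dist_eq_0_iff: "e \<in> E \<Longrightarrow> f \<in> P \<Longrightarrow> d e f = 0 \<longleftrightarrow> e = f"
  using bipolar unfolding bipolar_metric_space_def by blast

lemma bipolar_quadrilateral:
  "e \<in> E \<Longrightarrow> r \<in> E \<Longrightarrow> z \<in> P \<Longrightarrow> f \<in> P \<Longrightarrow> d e f \<le> d e z + d r z + d r f"
  using bipolar unfolding bipolar_metric_space_def by blast

lemma bipolar_eq_if_dist_le_tendsto_0:
  assumes "e \<in> E" "f \<in> P" and "\<forall>\<^sub>F n in sequentially. d e f \<le> g n" and "g \<longlonglongrightarrow> 0"
  shows "e = f"
proof -
  have "d e f \<le> 0"
    using assms(3,4) by (intro tendsto_le[OF _ assms(4) tendsto_const]) auto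
  with assms(1,2) show ?thesis
    using bipolar_dist_nonneg bipolar_dist_eq_0_iff by force
qed

lemma conv_left_unique:
  assumes "v \<in> E" "conv_left E P d x v" "conv_left E P d x w"
  shows "v = w"
proof (rule bipolar_eq_if_dist_le_tendsto_0)
  have x: "\<And>n. x n \<in> E" and "v \<in> P" "w \<in> P"
    using assms(2,3) unfolding conv_left_def by auto
  then show "v \<in> E" "w \<in> P" "\<forall>\<^sub>F n in sequentially. d v w \<le> d v v + d (x n) v + d (x n) w"
    using assms(1) by (auto intro!: always_eventually bipolar_quadrilateral)
  have "d v v = 0"
    using \<open>v \<in> E\<close> \<open>v \<in> P\<close> bipolar_dist_eq_0_iff by blast
  then show "(\<lambda>n. d v v + d (x n) v + d (x n) w) \<longlonglongrightarrow> 0"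
    using assms(2,3) unfolding conv_left_def by (auto intro: tendsto_add_zero)
qed

lemma cauchy_bisequence_diagonal_tendsto_0:
  assumes "cauchy_bisequence E P d x y"
  shows "(\<lambda>n. d (x n) (y n)) \<longlonglongrightarrow> 0"
proof (rule LIMSEQ_I)
  fix r :: real assume "0 < r"
  then obtain N where "\<forall>n\<ge>N. d (x n) (y n) < r"
    using assms unfolding cauchy_bisequence_def by blast
  moreover have "\<And>n. 0 \<le> d (x n) (y n)"
    using assms bipolar_dist_nonneg unfolding cauchy_bisequence_def by blast
  ultimately show "\<exists>N. \<forall>n\<ge>N. norm (d (x n) (y n) - 0) < r"
    by auto
qed

lemma cauchy_bisequence_biconvergent:
  assumes "complete_bipolar E P d" and "cauchy_bisequence E P d x y"
  obtains u where "u \<in> E \<inter> P" "conv_left E P d x u" "conv_right E P d y u"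
proof -
  obtain v u where v: "conv_left E P d x v" and u: "conv_right E P d y u"
    using assms unfolding complete_bipolar_def convergent_bisequence_def by blast
  have "u = v"
  proof (rule bipolar_eq_if_dist_le_tendsto_0)
    show "u \<in> E" "v \<in> P"
      using u v unfolding conv_left_def conv_right_def by auto
    then show "\<forall>\<^sub>F n in sequentially. d u v \<le> d u (y n) + d (x n) (y n) + d (x n) v"
      using u v unfolding conv_left_def conv_right_def by (auto intro!: always_eventually bipolar_quadrilateral)
    show "(\<lambda>n. d u (y n) + d (x n) (y n) + d (x n) v) \<longlonglongrightarrow> 0"
      using u v cauchy_bisequence_diagonal_tendsto_0[OF assms(2)]
      unfolding conv_left_def conv_right_def by (auto intro: tendsto_add_zero)
  qed
  then show ?thesis
    using that u v unfolding conv_left_def conv_right_def by auto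
qed

lemma bipolar_dist_le_geometric_forward:
  assumes x: "\<And>n. x n \<in> E" and y: "\<And>n. y n \<in> P" and "0 \<le> r" "r < 1"
    and diag: "\<And>n. d (x n) (y n) \<le> A * r ^ n"
    and shift: "\<And>n. d (x n) (y (Suc n)) \<le> A * r ^ n"
  shows "d (x n) (y (n + k)) \<le> 3 * A / (1 - r) * r ^ n"
proof -
  have "0 \<le> A"
    using order_trans[OF bipolar_dist_nonneg[OF x y] diag[of 0]] by simp
  then have A_r: "0 \<le> A * r ^ n" "A * r ^ Suc n \<le> A * r ^ n" for n
    using \<open>0 \<le> r\<close> \<open>r < 1\<close> by (simp_all add: mult_left_mono mult_left_le_one_le)
  have bound_nonneg: "0 \<le> 3 * A / (1 - r) * r ^ n" for n
    using \<open>0 \<le> A\<close> \<open>0 \<le> r\<close> \<open>r < 1\<close> by simp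
  have bound_step: "3 * A / (1 - r) * r ^ n = 3 * (A * r ^ n) + 3 * A / (1 - r) * r ^ Suc n" for n
    using \<open>r < 1\<close> by (simp add: divide_simps) (simp add: algebra_simps)
  show ?thesis
  proof (induction k arbitrary: n)
    case 0
    show ?case
      using diag[of n] A_r[of n] bound_step[of n] bound_nonneg[of "Suc n"] by simp
  next
    case (Suc k)
    have "d (x n) (y (n + Suc k))
        \<le> d (x n) (y (Suc n)) + d (x (Suc n)) (y (Suc n)) + d (x (Suc n)) (y (Suc n + k))"
      using x y by (simp add: bipolar_quadrilateral)
    also have "\<dots> \<le> A * r ^ n + A * r ^ Suc n + 3 * A / (1 - r) * r ^ Suc n"
      using shift[of n] diag[of "Suc n"] Suc[of "Suc n"] by linarith
    also have "\<dots> \<le> 3 * A / (1 - r) * r ^ n"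
      using A_r[of n] bound_step[of n] by linarith
    finally show ?case .
  qed
qed

end

lemma bipolar_metric_space_flip:
  assumes "bipolar_metric_space E P d"
  shows "bipolar_metric_space P E (\<lambda>a b. d b a)"
proof -
  have "d f e \<le> d z e + d z r + d f r" if "e \<in> P" "r \<in> P" "z \<in> E" "f \<in> E" for e r z f
    using bipolar_quadrilateral[OF assms, of f z r e] that by linarith
  with assms show ?thesis
    unfolding bipolar_metric_space_def by (auto simp: Int_commute)
qed

lemma cauchy_bisequence_if_geometric:
  assumes bipolar: "bipolar_metric_space E P d"
    and x: "\<And>n. x n \<in> E" and y: "\<And>n. y n \<in> P" and "0 \<le> r" "r < 1"
    and "\<And>n. d (x n) (y n) \<le> A * r ^ n"
    and "\<And>n. d (x n) (y (Suc n)) \<le> A * r ^ n"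
    and "\<And>n. d (x (Suc n)) (y n) \<le> A * r ^ n"
  shows "cauchy_bisequence E P d x y"
proof -
  define B where "B = 3 * A / (1 - r)"
  have bound: "d (x n) (y m) \<le> B * r ^ min n m" for n m
  proof (cases "n \<le> m")
    case True
    then obtain k where "m = n + k"
      using le_Suc_ex by blast
    then show ?thesis
      using True bipolar_dist_le_geometric_forward[OF bipolar x y assms(4-7)]
      by (simp add: B_def)
  next
    case False
    then obtain k where "n = m + k"
      by (metis le_Suc_ex nat_le_linear)
    then show ?thesis
      using False bipolar_dist_le_geometric_forward[OF bipolar_metric_space_flip[OF bipolar]
          y x assms(4,5,6,8)]
      by (simp add: B_def)
  qed
  have "(\<lambda>n. B * r ^ n) \<longlonglongrightarrow> 0"
    using assms(4,5) by (intro tendsto_mult_right_zero LIMSEQ_power_zero) auto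
  moreover have "\<exists>N. \<forall>n\<ge>N. \<forall>m\<ge>N. d (x n) (y m) < \<epsilon>" if "0 < \<epsilon>" for \<epsilon>
  proof -
    obtain N where N: "\<And>n. n \<ge> N \<Longrightarrow> \<bar>B * r ^ n\<bar> < \<epsilon>"
      using \<open>(\<lambda>n. B * r ^ n) \<longlonglongrightarrow> 0\<close> \<open>0 < \<epsilon>\<close> unfolding LIMSEQ_def dist_real_def by auto
    have "d (x n) (y m) < \<epsilon>" if "n \<ge> N" "m \<ge> N" for n m
      using N[of "min n m"] bound[of n m] that by simp
    then show ?thesis
      by blast
  qed
  ultimately show ?thesis
    unfolding cauchy_bisequence_def using x y by blast
qed

lemma covariantD:
  "covariant E P F \<Longrightarrow> e \<in> E \<Longrightarrow> F e \<in> E"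
  "covariant E P F \<Longrightarrow> f \<in> P \<Longrightarrow> F f \<in> P"
  unfolding covariant_def by auto

lemma covariant_funpow: "covariant E P F \<Longrightarrow> covariant E P (F ^^ n)"
  by (induction n) (auto simp: covariant_def image_subset_iff)

lemma continuous_orbit_limit_fixed:
  assumes "bipolar_metric_space E P d" "bipolar_continuous E P d F"
    and "u \<in> E" "conv_left E P d (\<lambda>n. (F ^^ n) e) u"
  shows "F u = u"
proof -
  have "conv_left E P d (\<lambda>n. F ((F ^^ n) e)) (F u)"
    using assms(2,4) unfolding bipolar_continuous_def by blast
  moreover have "conv_left E P d (\<lambda>n. F ((F ^^ n) e)) u"
  proof -
    have "(F ^^ Suc n) e \<in> E" for n
      using assms(4) unfolding conv_left_def by blast
    then show ?thesis
      using assms(4) LIMSEQ_Suc[of "\<lambda>n. d ((F ^^ n) e) u"] unfolding conv_left_def by simp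
  qed
  ultimately show ?thesis
    using conv_left_unique[OF assms(1,3)] by metis
qed

lemma bipolar_fixed_point_if_geometric:
  assumes bipolar: "bipolar_metric_space E P d" and "complete_bipolar E P d"
    and "covariant E P F" "bipolar_continuous E P d F" and "0 \<le> r" "r < 1"
    and geometric: "\<And>e f n. e \<in> E \<Longrightarrow> f \<in> P \<Longrightarrow> d ((F ^^ n) e) ((F ^^ n) f) \<le> C e f * r ^ n"
  obtains u where "u \<in> E \<inter> P" "F u = u"
proof -
  obtain e f where "e \<in> E" "f \<in> P"
    using bipolar unfolding bipolar_metric_space_def by blast
  then have "F e \<in> E" "F f \<in> P"
    using covariantD[OF \<open>covariant E P F\<close>] by auto
  define x where "x n = (F ^^ n) e" for n
  define y where "y n = (F ^^ n) f" for n
  have x: "x n \<in> E" and y: "y n \<in> P" for n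
    using covariantD[OF covariant_funpow[OF \<open>covariant E P F\<close>]] \<open>e \<in> E\<close> \<open>f \<in> P\<close>
    unfolding x_def y_def by auto
  define A where "A = max (C e f) (max (C e (F f)) (C (F e) f))"
  have "\<And>k. C e f * r ^ k \<le> A * r ^ k" "\<And>k. C e (F f) * r ^ k \<le> A * r ^ k"
    "\<And>k. C (F e) f * r ^ k \<le> A * r ^ k"
    unfolding A_def using \<open>0 \<le> r\<close> by (simp_all add: mult_right_mono)
  moreover have "x (Suc n) = (F ^^ n) (F e)" "y (Suc n) = (F ^^ n) (F f)" for n
    unfolding x_def y_def by (simp_all add: funpow_Suc_right del: funpow.simps)
  ultimately have "cauchy_bisequence E P d x y"
    using \<open>e \<in> E\<close> \<open>f \<in> P\<close> \<open>F e \<in> E\<close> \<open>F f \<in> P\<close> \<open>0 \<le> r\<close> \<open>r < 1\<close>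
    by (intro cauchy_bisequence_if_geometric[OF bipolar x y, where r = r and A = A])
      (simp_all add: x_def y_def order_trans[OF geometric])
  then obtain u where "u \<in> E \<inter> P" "conv_left E P d x u"
    using cauchy_bisequence_biconvergent[OF bipolar \<open>complete_bipolar E P d\<close>] by blast
  then show ?thesis
    using that continuous_orbit_limit_fixed[OF bipolar \<open>bipolar_continuous E P d F\<close>]
    unfolding x_def by blast
qed

lemma polynomial_ge_monomial:
  fixes c :: "nat \<Rightarrow> real"
  assumes "\<And>v. v \<le> \<sigma> \<Longrightarrow> 0 \<le> c v" "0 \<le> t" "\<rho> \<le> \<sigma>" "Q \<le> c \<rho>"
  shows "Q * t ^ \<rho> \<le> (\<Sum>v=0..\<sigma>. c v * t ^ v)"
proof -
  have "Q * t ^ \<rho> \<le> c \<rho> * t ^ \<rho>"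
    using assms(2,4) by (simp add: mult_right_mono)
  also have "\<dots> \<le> (\<Sum>v=0..\<sigma>. c v * t ^ v)"
    using assms(1-3) by (intro member_le_sum) auto
  finally show ?thesis .
qed

lemma funpow_contraction_le:
  fixes S :: "'a \<Rightarrow> 'a \<Rightarrow> real"
  assumes "covariant E P F" "0 \<le> \<pi>"
    and contraction: "\<And>e f. e \<in> E \<Longrightarrow> f \<in> P \<Longrightarrow> S (F e) (F f) \<le> \<pi> * S e f"
    and "e \<in> E" "f \<in> P"
  shows "S ((F ^^ n) e) ((F ^^ n) f) \<le> \<pi> ^ n * S e f"
proof (induction n)
  case (Suc n)
  have "(F ^^ n) e \<in> E" "(F ^^ n) f \<in> P"
    using covariantD[OF covariant_funpow[OF assms(1)]] assms(4,5) by auto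
  then have "S ((F ^^ Suc n) e) ((F ^^ Suc n) f) \<le> \<pi> * S ((F ^^ n) e) ((F ^^ n) f)"
    using contraction by simp
  also have "\<dots> \<le> \<pi> * (\<pi> ^ n * S e f)"
    using mult_left_mono[OF Suc.IH \<open>0 \<le> \<pi>\<close>] .
  finally show ?case
    by simp
qed simp

lemma funpow_dist_le_geometric:
  fixes S :: "'a \<Rightarrow> 'a \<Rightarrow> real"
  assumes "bipolar_metric_space E P d" "covariant E P F" "0 \<le> \<pi>" "0 < \<rho>" "0 < Q"
    and contraction: "\<And>e f. e \<in> E \<Longrightarrow> f \<in> P \<Longrightarrow> S (F e) (F f) \<le> \<pi> * S e f"
    and lower: "\<And>e f. e \<in> E \<Longrightarrow> f \<in> P \<Longrightarrow> Q * d e f ^ \<rho> \<le> S e f"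
    and "e \<in> E" "f \<in> P"
  shows "d ((F ^^ n) e) ((F ^^ n) f) \<le> root \<rho> (S e f / Q) * root \<rho> \<pi> ^ n"
proof -
  define a where "a = d ((F ^^ n) e) ((F ^^ n) f)"
  have "(F ^^ n) e \<in> E" "(F ^^ n) f \<in> P"
    using covariantD[OF covariant_funpow[OF assms(2)]] assms(8,9) by auto
  then have "0 \<le> a"
    unfolding a_def using bipolar_dist_nonneg[OF assms(1)] by blast
  have "Q * a ^ \<rho> \<le> S ((F ^^ n) e) ((F ^^ n) f)"
    unfolding a_def using lower \<open>(F ^^ n) e \<in> E\<close> \<open>(F ^^ n) f \<in> P\<close> .
  also have "S ((F ^^ n) e) ((F ^^ n) f) \<le> \<pi> ^ n * S e f"
    using funpow_contraction_le[where S = S, OF assms(2,3) contraction assms(8,9)] .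
  finally have "a ^ \<rho> \<le> \<pi> ^ n * (S e f / Q)"
    using \<open>0 < Q\<close> by (simp add: field_simps)
  then have "root \<rho> (a ^ \<rho>) \<le> root \<rho> (\<pi> ^ n * (S e f / Q))"
    using \<open>0 < \<rho>\<close> by (rule real_root_le_mono[rotated])
  also have "\<dots> = root \<rho> (S e f / Q) * root \<rho> \<pi> ^ n"
    by (simp only: real_root_mult real_root_power[OF \<open>0 < \<rho>\<close>] mult.commute)
  finally show ?thesis
    using \<open>0 \<le> a\<close> \<open>0 < \<rho>\<close> by (simp add: a_def real_root_pos2)
qed

lemma contraction_fixed_points_eq:
  fixes S :: "'a \<Rightarrow> 'a \<Rightarrow> real"
  assumes "bipolar_metric_space E P d" "\<pi> < 1" "0 < \<rho>" "0 < Q"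
    and contraction: "\<And>e f. e \<in> E \<Longrightarrow> f \<in> P \<Longrightarrow> S (F e) (F f) \<le> \<pi> * S e f"
    and lower: "\<And>e f. e \<in> E \<Longrightarrow> f \<in> P \<Longrightarrow> Q * d e f ^ \<rho> \<le> S e f"
    and "e \<in> E" "f \<in> P" "F e = e" "F f = f"
  shows "e = f"
proof -
  have "0 \<le> Q * d e f ^ \<rho>"
    using bipolar_dist_nonneg[OF assms(1,7,8)] \<open>0 < Q\<close> by simp
  moreover have "(1 - \<pi>) * S e f \<le> 0"
    using contraction[OF assms(7,8)] assms(9,10) by (simp add: algebra_simps)
  then have "S e f \<le> 0"
    using \<open>\<pi> < 1\<close> by (simp add: mult_le_0_iff)
  ultimately have "Q * d e f ^ \<rho> = 0"
    using lower[OF assms(7,8)] by linarith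
  then have "d e f = 0"
    using \<open>0 < Q\<close> by simp
  then show ?thesis
    using bipolar_dist_eq_0_iff[OF assms(1,7,8)] by simp
qed

theorem theorem3p2:
  fixes E P :: "'a set" and d :: "'a \<Rightarrow> 'a \<Rightarrow> real" and F :: "'a \<Rightarrow> 'a"
    and \<pi> :: real and \<sigma> :: nat and q :: "nat \<Rightarrow> 'a \<Rightarrow> 'a \<Rightarrow> real"
    and \<rho> :: nat and Q :: real
  assumes "bipolar_metric_space E P d"
    and "complete_bipolar E P d"
    and "covariant E P F"
    and "0 < \<pi>" and "\<pi> < 1" and "\<sigma> \<ge> 1"
    and "\<And>v e f. v \<le> \<sigma> \<Longrightarrow> e \<in> E \<Longrightarrow> f \<in> P \<Longrightarrow> q v e f \<ge> 0"
    and "\<And>e f. e \<in> E \<Longrightarrow> f \<in> P \<Longrightarrow>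
           (\<Sum>v=0..\<sigma>. q v (F e) (F f) * d (F e) (F f) ^ v)
             \<le> \<pi> * (\<Sum>v=0..\<sigma>. q v e f * d e f ^ v)"
    and "bipolar_continuous E P d F"
    and "1 \<le> \<rho>" and "\<rho> \<le> \<sigma>" and "Q > 0"
    and "\<And>e f. e \<in> E \<Longrightarrow> f \<in> P \<Longrightarrow> q \<rho> e f \<ge> Q"
  shows "\<exists>!g. g \<in> E \<union> P \<and> F g = g"
proof -
  define S where "S e f = (\<Sum>v=0..\<sigma>. q v e f * d e f ^ v)" for e f
  have contraction: "\<And>e f. e \<in> E \<Longrightarrow> f \<in> P \<Longrightarrow> S (F e) (F f) \<le> \<pi> * S e f"
    using assms(8) by (simp add: S_def)
  have lower: "\<And>e f. e \<in> E \<Longrightarrow> f \<in> P \<Longrightarrow> Q * d e f ^ \<rho> \<le> S e f"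
    unfolding S_def using assms(7,11,13) bipolar_dist_nonneg[OF assms(1)]
    by (intro polynomial_ge_monomial) auto
  have "0 < \<rho>" "0 \<le> root \<rho> \<pi>" "root \<rho> \<pi> < 1"
    using assms(4,5,10) by auto
  have geometric: "d ((F ^^ n) e) ((F ^^ n) f) \<le> root \<rho> (S e f / Q) * root \<rho> \<pi> ^ n"
    if "e \<in> E" "f \<in> P" for e f n
    using funpow_dist_le_geometric[where S = S, OF assms(1,3) _ \<open>0 < \<rho>\<close> assms(12)
        contraction lower that] assms(4) by simp
  obtain u where u: "u \<in> E \<inter> P" "F u = u"
    using bipolar_fixed_point_if_geometric[OF assms(1-3,9) \<open>0 \<le> root \<rho> \<pi>\<close> \<open>root \<rho> \<pi> < 1\<close>
        geometric] by blast
  have fixed_points_eq: "\<And>e f. e \<in> E \<Longrightarrow> f \<in> P \<Longrightarrow> F e = e \<Longrightarrow> F f = f \<Longrightarrow> e = f"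
    using contraction_fixed_points_eq[OF assms(1,5) \<open>0 < \<rho>\<close> assms(12) contraction lower] .
  show ?thesis
  proof (rule ex1I)
    show "u \<in> E \<union> P \<and> F u = u"
      using u by blast
    show "g = u" if "g \<in> E \<union> P \<and> F g = g" for g
      using that u fixed_points_eq by blast
  qed
qed

end
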